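(* Consider the semi-discrete scheme $\frac{d}{dt}\mathbf U_{i,j}=-\frac{\mathcal F^{EC}_{i+\frac12,j}-\mathcal F^{EC}_{i-\frac12,j}}{\Delta x}-\frac{\mathcal G^{EC}_{i,j+\frac12}-\mathcal G^{EC}_{i,j-\frac12}}{\Delta y}+\mathbf S_{i,j}$ with the fluxes and source term given in the context, and suppose the bottom values $\mathbf B_{i,j}$ are independent of time. If $\mathbf q^x_{i,j}=\mathbf q^y_{i,j}=0$ and $\mathbf h_{i,j}+\mathbf B_{i,j}=\mathbf C$ for all $i,j$ (with $\mathbf C\in\mathbb R^K$ a fixed vector), then $\frac{d}{dt}\mathbf h_{i,j}=\frac{d}{dt}\mathbf q^x_{i,j}=\frac{d}{dt}\mathbf q^y_{i,j}=0$ for all $i,j$; i.e., the scheme is well-balanced.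
   Context: Let $\mathcal M_k\in\mathbb R^{K\times K}$, $(\mathcal M_k)_{l,m}=\int\phi_k\phi_l\phi_m\rho$, where $\phi_1\equiv1,\dots,\phi_K$ are polynomials orthonormal with respect to a probability density $\rho$; $\mathcal P(\widehat z)=\sum_k\widehat z_k\mathcal M_k$; $g>0$. Uniform rectangular grid with cell sizes $\Delta x,\Delta y$; cell values $\mathbf U_{i,j}=(\mathbf h_{i,j},\mathbf q^x_{i,j},\mathbf q^y_{i,j})\in\mathbb R^{3K}$, bottom values $\mathbf B_{i,j}\in\mathbb R^K$, with $\mathcal P(\mathbf h_{i,j})$ positive definite; $\mathbf u_{i,j}=\mathcal P^{-1}(\mathbf h_{i,j})\mathbf q^x_{i,j}$, $\mathbf v_{i,j}=\mathcal P^{-1}(\mathbf h_{i,j})\mathbf q^y_{i,j}$. Averages/jumps: $\overline{\mathbf a}_{i+\frac12,j}=\tfrac12(\mathbf a_{i,j}+\mathbf a_{i+1,j})$, $[\![\mathbf a]\!]_{i+\frac12,j}=\mathbf a_{i+1,j}-\mathbf a_{i,j}$, analogously in $j$; $\overline{\mathcal P(\mathbf h)\mathbf h}$ is the average of $\mathcal P(\mathbf h_{i,j})\mathbf h_{i,j}$. $\mathcal F^{EC}_{i+\frac12,j}=\big(\mathcal P(\overline{\mathbf h})\overline{\mathbf u};\ \tfrac12 g\,\overline{\mathcal P(\mathbf h)\mathbf h}+\mathcal P(\overline{\mathbf u})\mathcal P(\overline{\mathbf h})\overline{\mathbf u};\ \mathcal P(\overline{\mathbf v})\mathcal P(\overline{\mathbf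 h})\overline{\mathbf u}\big)_{i+\frac12,j}$, $\mathcal G^{EC}_{i,j+\frac12}=\big(\mathcal P(\overline{\mathbf h})\overline{\mathbf v};\ \mathcal P(\overline{\mathbf u})\mathcal P(\overline{\mathbf h})\overline{\mathbf v};\ \tfrac12 g\,\overline{\mathcal P(\mathbf h)\mathbf h}+\mathcal P(\overline{\mathbf v})\mathcal P(\overline{\mathbf h})\overline{\mathbf v}\big)_{i,j+\frac12}$, $\mathbf S_{i,j}=\Big(0;\ -\tfrac{g}{2\Delta x}\big(\mathcal P(\overline{\mathbf h}_{i+\frac12,j})[\![\mathbf B]\!]_{i+\frac12,j}+\mathcal P(\overline{\mathbf h}_{i-\frac12,j})[\![\mathbf B]\!]_{i-\frac12,j}\big);\ -\tfrac{g}{2\Delta y}\big(\mathcal P(\overline{\mathbf h}_{i,j+\frac12})[\![\mathbf B]\!]_{i,j+\frac12}+\mathcal P(\overline{\mathbf h}_{i,j-\frac12})[\![\mathbf B]\!]_{i,j-\frac12}\big)\Big)$ ($K$-blocks separated by semicolons). *)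

theory Defs
  imports "HOL-Analysis.Analysis" "HOL-Computational_Algebra.Polynomial"
begin

text \<open>Stochastic-Galerkin vectors in R^K are modelled as real^'k for a finite index type 'k
  (K = CARD('k)).  Grid functions are indexed by (i,j) :: int \<times> int; the flux at the
  interface i+1/2 is indexed by i, the flux at j+1/2 by j.\<close>

definition Mk :: "('k::finite \<Rightarrow> real \<Rightarrow> real) \<Rightarrow> (real \<Rightarrow> real) \<Rightarrow> 'k \<Rightarrow> real^'k^'k" where
  "Mk \<phi> \<rho> k = (\<chi> l m. integral\<^sup>L lborel (\<lambda>x. \<phi> k x * \<phi> l x * \<phi> m x * \<rho> x))"

definition Pm :: "('k::finite \<Rightarrow> real \<Rightarrow> real) \<Rightarrow> (real \<Rightarrow> real) \<Rightarrow> real^'k \<Rightarrow> real^'k^'k" where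
  "Pm \<phi> \<rho> z = (\<Sum>k\<in>UNIV. z $ k *\<^sub>R Mk \<phi> \<rho> k)"

definition pos_def_mat :: "real^'k::finite^'k \<Rightarrow> bool" where
  "pos_def_mat A \<longleftrightarrow> (\<forall>x. x \<noteq> 0 \<longrightarrow> x \<bullet> (A *v x) > 0)"

type_synonym 'k grid = "int \<Rightarrow> int \<Rightarrow> real^'k"

definition velo :: "('k::finite \<Rightarrow> real \<Rightarrow> real) \<Rightarrow> (real \<Rightarrow> real) \<Rightarrow> 'k grid \<Rightarrow> 'k grid \<Rightarrow> 'k grid" where
  "velo \<phi> \<rho> h q i j = matrix_inv (Pm \<phi> \<rho> (h i j)) *v q i j"

definition avgx :: "'k grid \<Rightarrow> int \<Rightarrow> int \<Rightarrow> real^'k" where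
  "avgx a i j = (1/2) *\<^sub>R (a i j + a (i+1) j)"

definition avgy :: "'k grid \<Rightarrow> int \<Rightarrow> int \<Rightarrow> real^'k" where
  "avgy a i j = (1/2) *\<^sub>R (a i j + a i (j+1))"

definition hh :: "('k::finite \<Rightarrow> real \<Rightarrow> real) \<Rightarrow> (real \<Rightarrow> real) \<Rightarrow> 'k grid \<Rightarrow> 'k grid" where
  "hh \<phi> \<rho> h i j = Pm \<phi> \<rho> (h i j) *v h i j"

definition Fh where
  "Fh \<phi> \<rho> h qx i j = Pm \<phi> \<rho> (avgx h i j) *v avgx (velo \<phi> \<rho> h qx) i j"
definition Fqx where
  "Fqx \<phi> \<rho> g h qx i j = (g/2) *\<^sub>R avgx (hh \<phi> \<rho> h) i j
     + Pm \<phi> \<rho> (avgx (velo \<phi> \<rho> h qx) i j) *v (Pm \<phi> \<rho> (avgx h i j) *v avgx (velo \<phi> \<rho> h qx) i j)"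
definition Fqy where
  "Fqy \<phi> \<rho> h qx qy i j =
     Pm \<phi> \<rho> (avgx (velo \<phi> \<rho> h qy) i j) *v (Pm \<phi> \<rho> (avgx h i j) *v avgx (velo \<phi> \<rho> h qx) i j)"

definition Gh where
  "Gh \<phi> \<rho> h qy i j = Pm \<phi> \<rho> (avgy h i j) *v avgy (velo \<phi> \<rho> h qy) i j"
definition Gqx where
  "Gqx \<phi> \<rho> h qx qy i j =
     Pm \<phi> \<rho> (avgy (velo \<phi> \<rho> h qx) i j) *v (Pm \<phi> \<rho> (avgy h i j) *v avgy (velo \<phi> \<rho> h qy) i j)"
definition Gqy where
  "Gqy \<phi> \<rho> g h qy i j = (g/2) *\<^sub>R avgy (hh \<phi> \<rho> h) i j
     + Pm \<phi> \<rho> (avgy (velo \<phi> \<rho> h qy) i j) *v (Pm \<phi> \<rho> (avgy h i j) *v avgy (velo \<phi> \<rho> h qy) i j)"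

definition Sqx where
  "Sqx \<phi> \<rho> g dx h (B :: 'k::finite grid) i j = - (g / (2*dx)) *\<^sub>R
     (Pm \<phi> \<rho> (avgx h i j) *v (B (i+1) j - B i j) + Pm \<phi> \<rho> (avgx h (i-1) j) *v (B i j - B (i-1) j))"
definition Sqy where
  "Sqy \<phi> \<rho> g dy h (B :: 'k::finite grid) i j = - (g / (2*dy)) *\<^sub>R
     (Pm \<phi> \<rho> (avgy h i j) *v (B i (j+1) - B i j) + Pm \<phi> \<rho> (avgy h i (j-1)) *v (B i j - B i (j-1)))"

definition rhs_h :: "('k::finite \<Rightarrow> real \<Rightarrow> real) \<Rightarrow> (real \<Rightarrow> real) \<Rightarrow> real \<Rightarrow> real \<Rightarrow> real
    \<Rightarrow> 'k grid \<Rightarrow> 'k grid \<Rightarrow> 'k grid \<Rightarrow> 'k grid \<Rightarrow> int \<Rightarrow> int \<Rightarrow> real^'k" where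
  "rhs_h \<phi> \<rho> g dx dy h qx qy B i j =
     - (1/dx) *\<^sub>R (Fh \<phi> \<rho> h qx i j - Fh \<phi> \<rho> h qx (i-1) j)
     - (1/dy) *\<^sub>R (Gh \<phi> \<rho> h qy i j - Gh \<phi> \<rho> h qy i (j-1))"

definition rhs_qx :: "('k::finite \<Rightarrow> real \<Rightarrow> real) \<Rightarrow> (real \<Rightarrow> real) \<Rightarrow> real \<Rightarrow> real \<Rightarrow> real
    \<Rightarrow> 'k grid \<Rightarrow> 'k grid \<Rightarrow> 'k grid \<Rightarrow> 'k grid \<Rightarrow> int \<Rightarrow> int \<Rightarrow> real^'k" where
  "rhs_qx \<phi> \<rho> g dx dy h qx qy B i j =
     - (1/dx) *\<^sub>R (Fqx \<phi> \<rho> g h qx i j - Fqx \<phi> \<rho> g h qx (i-1) j)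
     - (1/dy) *\<^sub>R (Gqx \<phi> \<rho> h qx qy i j - Gqx \<phi> \<rho> h qx qy i (j-1))
     + Sqx \<phi> \<rho> g dx h B i j"

definition rhs_qy :: "('k::finite \<Rightarrow> real \<Rightarrow> real) \<Rightarrow> (real \<Rightarrow> real) \<Rightarrow> real \<Rightarrow> real \<Rightarrow> real
    \<Rightarrow> 'k grid \<Rightarrow> 'k grid \<Rightarrow> 'k grid \<Rightarrow> 'k grid \<Rightarrow> int \<Rightarrow> int \<Rightarrow> real^'k" where
  "rhs_qy \<phi> \<rho> g dx dy h qx qy B i j =
     - (1/dx) *\<^sub>R (Fqy \<phi> \<rho> h qx qy i j - Fqy \<phi> \<rho> h qx qy (i-1) j)
     - (1/dy) *\<^sub>R (Gqy \<phi> \<rho> g h qy i j - Gqy \<phi> \<rho> g h qy i (j-1))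
     + Sqy \<phi> \<rho> g dy h B i j"

end

theory Submission
  imports Defs
begin

text \<open>The triple products \<open>\<integral>\<phi>\<^sub>k\<phi>\<^sub>l\<phi>\<^sub>m\<rho>\<close> are symmetric in \<open>k\<close> and \<open>m\<close>, so
  \<open>(a, b) \<mapsto> P(a) b\<close> is a symmetric bilinear map and therefore
  \<open>P((a + b)/2) (a - b) = (P(a) a - P(b) b)/2\<close>.  For the lake at rest the bottom jumps are
  minus the depth jumps, so this identity turns the discrete source term into a central
  difference of \<open>(g/2) P(h) h\<close>, which cancels the flux difference; all other flux terms
  vanish with the velocity.  The velocity of zero discharge is zero whatever \<open>matrix_inv\<close>
  returns.\<close>

lemma bilinear_sym_midpoint_diff:
  fixes f :: "'a::real_vector \<Rightarrow> 'a \<Rightarrow> 'b::real_vector"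
  assumes "bilinear f" and "\<And>x y. f x y = f y x"
  shows "f ((1/2) *\<^sub>R (a + b)) (a - b) = (1/2) *\<^sub>R (f a a - f b b)"
proof -
  have "f ((1/2) *\<^sub>R (a + b)) (a - b) = (1/2) *\<^sub>R ((f a a - f a b) + (f b a - f b b))"
    using assms(1) by (simp add: bilinear_lmul bilinear_ladd bilinear_rsub)
  then show ?thesis
    using assms(2)[of a b] by simp
qed

lemma Mk_component_swap: "Mk \<phi> \<rho> k $ l $ m = Mk \<phi> \<rho> m $ l $ k"
  unfolding Mk_def by (simp add: mult.commute mult.left_commute)

lemma Pm_component: "Pm \<phi> \<rho> z $ l $ m = (\<Sum>k\<in>UNIV. z $ k * Mk \<phi> \<rho> k $ l $ m)"
  unfolding Pm_def by (simp add: sum_component)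

lemma Pm_mult_commute: "Pm \<phi> \<rho> a *v b = Pm \<phi> \<rho> b *v a"
proof -
  have "(Pm \<phi> \<rho> a *v b) $ l = (Pm \<phi> \<rho> b *v a) $ l" for l
  proof -
    have "(Pm \<phi> \<rho> a *v b) $ l = (\<Sum>m\<in>UNIV. \<Sum>k\<in>UNIV. a $ k * Mk \<phi> \<rho> k $ l $ m * b $ m)"
      by (simp add: matrix_vector_mult_def Pm_component sum_distrib_right)
    also have "\<dots> = (\<Sum>k\<in>UNIV. \<Sum>m\<in>UNIV. b $ m * Mk \<phi> \<rho> m $ l $ k * a $ k)"
      by (subst sum.swap) (simp add: Mk_component_swap[of _ _ _ l] mult.commute mult.left_commute)
    also have "\<dots> = (Pm \<phi> \<rho> b *v a) $ l"
      by (simp add: matrix_vector_mult_def Pm_component sum_distrib_right)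
    finally show ?thesis .
  qed
  then show ?thesis by (simp add: vec_eq_iff)
qed

lemma bilinear_Pm: "bilinear (\<lambda>a b. Pm \<phi> \<rho> a *v b)"
proof -
  have "linear (Pm \<phi> \<rho>)"
    by (rule linearI) (simp_all add: Pm_def scaleR_add_left sum.distrib scaleR_sum_right)
  then have "linear (\<lambda>a. Pm \<phi> \<rho> a *v b)" for b
    using linear_compose[of "Pm \<phi> \<rho>" "\<lambda>A. A *v b"]
    by (simp add: o_def linearI matrix_vector_mult_add_rdistrib scaleR_matrix_vector_assoc)
  then show ?thesis
    by (simp add: bilinear_def)
qed

lemma Pm_midpoint_mult_diff:
  "Pm \<phi> \<rho> ((1/2) *\<^sub>R (a + b)) *v (a - b) = (1/2) *\<^sub>R (Pm \<phi> \<rho> a *v a - Pm \<phi> \<rho> b *v b)"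
  using bilinear_sym_midpoint_diff[OF bilinear_Pm Pm_mult_commute] .

lemma velo_zero_discharge: "velo \<phi> \<rho> h (\<lambda>i j. 0) = (\<lambda>i j. 0)"
  by (intro ext) (simp add: velo_def)

lemma avgx_zero [simp]: "avgx (\<lambda>i j. 0) i j = 0"
  by (simp add: avgx_def)

lemma avgy_zero [simp]: "avgy (\<lambda>i j. 0) i j = 0"
  by (simp add: avgy_def)

lemma bottom_jump_lake_at_rest:
  fixes h B :: "'i \<Rightarrow> 'j \<Rightarrow> 'a::ab_group_add"
  assumes "\<And>i j. h i j + B i j = C"
  shows "B i' j' - B i j = h i j - h i' j'"
proof -
  have "B a b = C - h a b" for a b
    using assms[of a b] by (metis add_diff_cancel_left')
  then show ?thesis
    by simp
qed

lemma Sqx_lake_at_rest: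
  assumes "\<And>i j. h i j + B i j = C"
  shows "Sqx \<phi> \<rho> g dx h B i j = (g / (4*dx)) *\<^sub>R (hh \<phi> \<rho> h (i+1) j - hh \<phi> \<rho> h (i-1) j)"
proof -
  have "Sqx \<phi> \<rho> g dx h B i j = - (g / (2*dx)) *\<^sub>R
      ((1/2) *\<^sub>R (hh \<phi> \<rho> h i j - hh \<phi> \<rho> h (i+1) j) + (1/2) *\<^sub>R (hh \<phi> \<rho> h (i-1) j - hh \<phi> \<rho> h i j))"
    unfolding Sqx_def bottom_jump_lake_at_rest[where h = h and B = B, OF assms]
      avgx_def hh_def diff_add_cancel
    by (simp only: Pm_midpoint_mult_diff)
  then show ?thesis
    by (simp add: algebra_simps)
qed

lemma Sqy_lake_at_rest:
  assumes "\<And>i j. h i j + B i j = C"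
  shows "Sqy \<phi> \<rho> g dy h B i j = (g / (4*dy)) *\<^sub>R (hh \<phi> \<rho> h i (j+1) - hh \<phi> \<rho> h i (j-1))"
proof -
  have "Sqy \<phi> \<rho> g dy h B i j = - (g / (2*dy)) *\<^sub>R
      ((1/2) *\<^sub>R (hh \<phi> \<rho> h i j - hh \<phi> \<rho> h i (j+1)) + (1/2) *\<^sub>R (hh \<phi> \<rho> h i (j-1) - hh \<phi> \<rho> h i j))"
    unfolding Sqy_def bottom_jump_lake_at_rest[where h = h and B = B, OF assms]
      avgy_def hh_def diff_add_cancel
    by (simp only: Pm_midpoint_mult_diff)
  then show ?thesis
    by (simp add: algebra_simps)
qed

lemma rhs_h_zero_discharge: "rhs_h \<phi> \<rho> g dx dy h (\<lambda>i j. 0) (\<lambda>i j. 0) B i j = 0"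
  by (simp add: rhs_h_def Fh_def Gh_def velo_zero_discharge)

lemma rhs_qx_lake_at_rest:
  assumes "\<And>i j. h i j + B i j = C"
  shows "rhs_qx \<phi> \<rho> g dx dy h (\<lambda>i j. 0) (\<lambda>i j. 0) B i j = 0"
  by (simp add: rhs_qx_def Fqx_def Gqx_def velo_zero_discharge Sqx_lake_at_rest[OF assms]
      avgx_def algebra_simps)

lemma rhs_qy_lake_at_rest:
  assumes "\<And>i j. h i j + B i j = C"
  shows "rhs_qy \<phi> \<rho> g dx dy h (\<lambda>i j. 0) (\<lambda>i j. 0) B i j = 0"
  by (simp add: rhs_qy_def Fqy_def Gqy_def velo_zero_discharge Sqy_lake_at_rest[OF assms]
      avgy_def algebra_simps)

theorem lemma4p3:
  fixes \<phi> :: "'k::finite \<Rightarrow> real \<Rightarrow> real" and p :: "'k \<Rightarrow> real poly"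
    and \<rho> :: "real \<Rightarrow> real" and k1 :: 'k
    and g dx dy t :: real
    and h qx qy :: "real \<Rightarrow> int \<Rightarrow> int \<Rightarrow> real^'k"
    and B :: "int \<Rightarrow> int \<Rightarrow> real^'k" and C :: "real^'k"
  assumes polys: "\<forall>k. \<phi> k = poly (p k)"
    and first_one: "\<phi> k1 = (\<lambda>_. 1)"
    and rho_meas: "\<rho> \<in> borel_measurable lborel"
    and rho_nonneg: "\<forall>x. \<rho> x \<ge> 0"
    and rho_int: "integrable lborel \<rho>"
    and rho_prob: "integral\<^sup>L lborel \<rho> = 1"
    and triple_int: "\<forall>k l m. integrable lborel (\<lambda>x. \<phi> k x * \<phi> l x * \<phi> m x * \<rho> x)"
    and orthonormal: "\<forall>k l. integral\<^sup>L lborel (\<lambda>x. \<phi> k x * \<phi> l x * \<rho> x) = (if k = l then 1 else 0)"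
    and g_pos: "g > 0" and dx_pos: "dx > 0" and dy_pos: "dy > 0"
    and posdef: "\<forall>i j. pos_def_mat (Pm \<phi> \<rho> (h t i j))"
    and ode_h: "\<forall>s i j. ((\<lambda>s'. h s' i j) has_vector_derivative
                  rhs_h \<phi> \<rho> g dx dy (h s) (qx s) (qy s) B i j) (at s)"
    and ode_qx: "\<forall>s i j. ((\<lambda>s'. qx s' i j) has_vector_derivative
                  rhs_qx \<phi> \<rho> g dx dy (h s) (qx s) (qy s) B i j) (at s)"
    and ode_qy: "\<forall>s i j. ((\<lambda>s'. qy s' i j) has_vector_derivative
                  rhs_qy \<phi> \<rho> g dx dy (h s) (qx s) (qy s) B i j) (at s)"
    and rest_qx: "\<forall>i j. qx t i j = 0"
    and rest_qy: "\<forall>i j. qy t i j = 0"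
    and lake: "\<forall>i j. h t i j + B i j = C"
  shows "\<forall>i j. ((\<lambda>s. h s i j) has_vector_derivative 0) (at t)
             \<and> ((\<lambda>s. qx s i j) has_vector_derivative 0) (at t)
             \<and> ((\<lambda>s. qy s i j) has_vector_derivative 0) (at t)"
proof (intro allI)
  fix i j
  have "qx t = (\<lambda>i j. 0)" and "qy t = (\<lambda>i j. 0)"
    using rest_qx rest_qy by (simp_all add: fun_eq_iff)
  moreover have "\<And>i j. h t i j + B i j = C"
    using lake by blast
  ultimately have "rhs_h \<phi> \<rho> g dx dy (h t) (qx t) (qy t) B i j = 0"
    and "rhs_qx \<phi> \<rho> g dx dy (h t) (qx t) (qy t) B i j = 0"
    and "rhs_qy \<phi> \<rho> g dx dy (h t) (qx t) (qy t) B i j = 0"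
    by (simp_all add: rhs_h_zero_discharge rhs_qx_lake_at_rest rhs_qy_lake_at_rest)
  then show "((\<lambda>s. h s i j) has_vector_derivative 0) (at t)
      \<and> ((\<lambda>s. qx s i j) has_vector_derivative 0) (at t)
      \<and> ((\<lambda>s. qy s i j) has_vector_derivative 0) (at t)"
    using ode_h ode_qx ode_qy by metis
qed

end
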